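(* Let $Y$ be a real Banach lattice. The following conditions are equivalent: 1) $Y$ is uniformly monotone. 2) For every $0<\varepsilon<1$ there is $\eta(\varepsilon)>0$ such that whenever $u\in Y$, $v\in Y$ with $\Vert v\Vert=1$, $0\le u\le v$ and $\Vert v-u\Vert>1-\eta(\varepsilon)$, then $\Vert u\Vert\le\varepsilon$. 3) For every $0<\varepsilon<1$ there is $\eta(\varepsilon)>0$ such that whenever $u,v\in Y$ with $0\le u\le v$ and $\Vert v-u\Vert>(1-\eta(\varepsilon))\Vert v\Vert$, then $\Vert u\Vert\le\varepsilon\Vert v\Vert$. Moreover, if 2) holds with $\eta$, then $Y$ is uniformly monotone with $\delta(\varepsilon)=\eta(\varepsilon/2)$; and if $Y$ is uniformly monotone with $\delta(\varepsilon)$, then conditions 2) and 3) hold with $\eta(\varepsilon)=\frac{\delta(\varepsilon)}{1+\delta(\varepsilon)}$.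
   Context: A Banach lattice $E$ is uniformly monotone if for every $\varepsilon>0$ there is $\delta(\varepsilon)>0$ such that whenever $x\in E$ with $\Vert x\Vert=1$, $y\in E$, $x,y\ge0$, and $\Vert x+y\Vert\le 1+\delta(\varepsilon)$, then $\Vert y\Vert\le\varepsilon$; we then say $E$ is uniformly monotone with $\delta$. *)

theory Defs
  imports "HOL-Analysis.Analysis"
begin

class banach_lattice = banach + ordered_real_vector + lattice +
  assumes lattice_norm: "sup x (- x) \<le> sup y (- y) \<Longrightarrow> norm x \<le> norm y"

definition um_prop :: "'a::banach_lattice itself \<Rightarrow> real \<Rightarrow> real \<Rightarrow> bool" where
  "um_prop Y \<epsilon> d \<longleftrightarrow> d > 0 \<and>
     (\<forall>x y::'a. norm x = 1 \<and> 0 \<le> x \<and> 0 \<le> y \<and> norm (x + y) \<le> 1 + d \<longrightarrow> norm y \<le> \<epsilon>)"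

definition uniformly_monotone_with :: "'a::banach_lattice itself \<Rightarrow> (real \<Rightarrow> real) \<Rightarrow> bool" where
  "uniformly_monotone_with Y \<delta> \<longleftrightarrow> (\<forall>\<epsilon>>0. um_prop Y \<epsilon> (\<delta> \<epsilon>))"

definition uniformly_monotone :: "'a::banach_lattice itself \<Rightarrow> bool" where
  "uniformly_monotone Y \<longleftrightarrow> (\<exists>\<delta>. uniformly_monotone_with Y \<delta>)"

definition cond2_prop :: "'a::banach_lattice itself \<Rightarrow> real \<Rightarrow> real \<Rightarrow> bool" where
  "cond2_prop Y \<epsilon> e \<longleftrightarrow> e > 0 \<and>
     (\<forall>u v::'a. norm v = 1 \<and> 0 \<le> u \<and> u \<le> v \<and> norm (v - u) > 1 - e \<longrightarrow> norm u \<le> \<epsilon>)"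

definition cond2_with :: "'a::banach_lattice itself \<Rightarrow> (real \<Rightarrow> real) \<Rightarrow> bool" where
  "cond2_with Y \<eta> \<longleftrightarrow> (\<forall>\<epsilon>. 0 < \<epsilon> \<and> \<epsilon> < 1 \<longrightarrow> cond2_prop Y \<epsilon> (\<eta> \<epsilon>))"

definition cond3_prop :: "'a::banach_lattice itself \<Rightarrow> real \<Rightarrow> real \<Rightarrow> bool" where
  "cond3_prop Y \<epsilon> e \<longleftrightarrow> e > 0 \<and>
     (\<forall>u v::'a. 0 \<le> u \<and> u \<le> v \<and> norm (v - u) > (1 - e) * norm v \<longrightarrow> norm u \<le> \<epsilon> * norm v)"

definition cond3_with :: "'a::banach_lattice itself \<Rightarrow> (real \<Rightarrow> real) \<Rightarrow> bool" where
  "cond3_with Y \<eta> \<longleftrightarrow> (\<forall>\<epsilon>. 0 < \<epsilon> \<and> \<epsilon> < 1 \<longrightarrow> cond3_prop Y \<epsilon> (\<eta> \<epsilon>))"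

end

theory Submission
  imports Defs
begin

text \<open>All conditions are invariant under positive scaling, so condition 3 is just
  condition 2 without the normalisation of \<open>v\<close>. Uniform monotonicity and condition 3
  are then exchanged by the substitution \<open>x = v - u\<close>, \<open>y = u\<close>: the hypothesis
  \<open>\<parallel>x + y\<parallel> \<le> (1 + \<delta>) \<parallel>x\<parallel>\<close> is \<open>\<parallel>v - u\<parallel> \<ge> (1 - \<eta>) \<parallel>v\<parallel>\<close> with
  \<open>1 - \<eta> = 1 / (1 + \<delta>)\<close>. Conversely \<open>(1 - \<eta>)(1 + \<eta>) < 1\<close> and \<open>\<eta> \<le> 1\<close>, so
  condition 3 for \<open>\<epsilon>/2\<close> gives \<open>\<parallel>y\<parallel> \<le> \<epsilon>/2 \<parallel>x + y\<parallel> \<le> \<epsilon>/2 (1 + \<eta>) \<le> \<epsilon>\<close>.\<close>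

lemma norm_le_norm_if_nonneg_le:
  fixes x y :: "'a::banach_lattice"
  assumes "0 \<le> x" "x \<le> y"
  shows "norm x \<le> norm y"
proof -
  have "sup z (- z) = z" if "0 \<le> z" for z :: 'a
    using that by (intro sup_absorb1) (meson neg_le_0_iff_le order.trans)
  then show ?thesis
    using assms lattice_norm[of x y] by auto
qed

lemma cond2_prop_imp_cond3_prop:
  assumes "cond2_prop Y \<epsilon> e"
  shows "cond3_prop Y \<epsilon> e"
  unfolding cond3_prop_def
proof (intro conjI allI impI)
  show "e > 0"
    using assms by (simp add: cond2_prop_def)
  fix u v :: 'a
  assume uv: "0 \<le> u \<and> u \<le> v \<and> norm (v - u) > (1 - e) * norm v"
  have "norm (v - u) \<le> norm v"
    using uv norm_le_norm_if_nonneg_le[of "v - u" v] by simp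
  with uv have "norm v > 0"
    by (smt (verit) mult_eq_0_iff norm_ge_zero)
  define c where "c = 1 / norm v"
  have c: "c > 0" "c * norm v = 1"
    using \<open>norm v > 0\<close> by (simp_all add: c_def)
  have "norm (c *\<^sub>R v) = 1" "0 \<le> c *\<^sub>R u" "c *\<^sub>R u \<le> c *\<^sub>R v"
    using uv c by (auto intro: scaleR_nonneg_nonneg scaleR_left_mono)
  moreover have "norm (c *\<^sub>R v - c *\<^sub>R u) > 1 - e"
  proof -
    have "norm (c *\<^sub>R v - c *\<^sub>R u) = c * norm (v - u)"
      using c by (simp flip: scaleR_diff_right)
    also have "\<dots> > c * ((1 - e) * norm v)"
      using uv c by simp
    also have "c * ((1 - e) * norm v) = 1 - e"
      using c by (metis mult.left_commute mult.right_neutral)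
    finally show ?thesis .
  qed
  ultimately have "c * norm u \<le> \<epsilon>"
    using assms c unfolding cond2_prop_def by (metis abs_of_pos norm_scaleR)
  then show "norm u \<le> \<epsilon> * norm v"
    using \<open>norm v > 0\<close> by (simp add: c_def field_simps)
qed

lemma cond3_prop_imp_cond2_prop:
  assumes "cond3_prop Y \<epsilon> e"
  shows "cond2_prop Y \<epsilon> e"
  using assms unfolding cond2_prop_def cond3_prop_def by (metis mult.right_neutral)

lemma cond2_with_iff_cond3_with: "cond2_with Y \<eta> \<longleftrightarrow> cond3_with Y \<eta>"
  unfolding cond2_with_def cond3_with_def
  using cond2_prop_imp_cond3_prop cond3_prop_imp_cond2_prop by blast

lemma um_prop_homogeneous:
  fixes x y :: "'a::banach_lattice"
  assumes um: "um_prop (Y :: 'a itself) \<epsilon> d"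
    and "0 \<le> x" "0 \<le> y" "norm (x + y) \<le> (1 + d) * norm x"
  shows "norm y \<le> \<epsilon> * norm x"
proof (cases "norm x = 0")
  case True
  then show ?thesis
    using assms norm_le_norm_if_nonneg_le[of y "x + y"] by simp
next
  case False
  define c where "c = 1 / norm x"
  have c: "c > 0" "c * norm x = 1"
    using False by (simp_all add: c_def)
  have "norm (c *\<^sub>R x) = 1" "0 \<le> c *\<^sub>R x" "0 \<le> c *\<^sub>R y"
    using assms c by (auto intro: scaleR_nonneg_nonneg)
  moreover have "norm (c *\<^sub>R x + c *\<^sub>R y) \<le> 1 + d"
  proof -
    have "norm (c *\<^sub>R x + c *\<^sub>R y) = c * norm (x + y)"
      using c by (simp flip: scaleR_add_right)
    also have "\<dots> \<le> c * ((1 + d) * norm x)"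
      using assms c by simp
    also have "c * ((1 + d) * norm x) = 1 + d"
      using c by (metis mult.left_commute mult.right_neutral)
    finally show ?thesis .
  qed
  ultimately have "c * norm y \<le> \<epsilon>"
    using um c unfolding um_prop_def by (metis abs_of_pos norm_scaleR)
  then show ?thesis
    using False by (simp add: c_def field_simps)
qed

lemma um_prop_imp_cond3_prop:
  assumes um: "um_prop Y \<epsilon> d" and "0 \<le> \<epsilon>"
  shows "cond3_prop Y \<epsilon> (d / (1 + d))"
  unfolding cond3_prop_def
proof (intro conjI allI impI)
  have "d > 0"
    using um by (simp add: um_prop_def)
  then show "d / (1 + d) > 0"
    by simp
  fix u v :: 'a
  assume uv: "0 \<le> u \<and> u \<le> v \<and> norm (v - u) > (1 - d / (1 + d)) * norm v"
  have "1 - d / (1 + d) = 1 / (1 + d)"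
    using \<open>d > 0\<close> by (simp add: field_simps)
  with uv \<open>d > 0\<close> have "norm ((v - u) + u) \<le> (1 + d) * norm (v - u)"
    by (simp add: field_simps)
  then have "norm u \<le> \<epsilon> * norm (v - u)"
    using um uv by (auto intro: um_prop_homogeneous)
  also have "\<dots> \<le> \<epsilon> * norm v"
    using uv \<open>0 \<le> \<epsilon>\<close> norm_le_norm_if_nonneg_le[of "v - u" v] by (simp add: mult_left_mono)
  finally show "norm u \<le> \<epsilon> * norm v" .
qed

lemma cond3_prop_imp_um_prop:
  assumes c3: "cond3_prop Y (\<epsilon> / 2) e" and "0 < \<epsilon>" "\<epsilon> < 2"
  shows "um_prop Y \<epsilon> e"
  unfolding um_prop_def
proof (intro conjI allI impI)
  show "e > 0"
    using c3 by (simp add: cond3_prop_def)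
  fix x y :: 'a
  assume xy: "norm x = 1 \<and> 0 \<le> x \<and> 0 \<le> y \<and> norm (x + y) \<le> 1 + e"
  have "e \<le> 1"
  proof (rule ccontr)
    assume "\<not> e \<le> 1"
    then have "norm (x - x) > (1 - e) * norm x"
      using xy by simp
    then have "norm x \<le> \<epsilon> / 2 * norm x"
      using c3 xy unfolding cond3_prop_def by blast
    then show False
      using xy \<open>\<epsilon> < 2\<close> by simp
  qed
  have "(1 - e) * norm (x + y) \<le> (1 - e) * (1 + e)"
    using xy \<open>e \<le> 1\<close> by (simp add: mult_left_mono)
  also have "\<dots> < norm ((x + y) - y)"
    using xy \<open>e > 0\<close> by (simp add: algebra_simps)
  finally have "norm y \<le> \<epsilon> / 2 * norm (x + y)"
    using c3 xy unfolding cond3_prop_def by auto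
  also have "\<dots> \<le> \<epsilon> / 2 * 2"
    using xy \<open>e \<le> 1\<close> \<open>0 < \<epsilon>\<close> by (intro mult_left_mono) auto
  finally show "norm y \<le> \<epsilon>"
    by simp
qed

lemma um_prop_mono:
  assumes "um_prop Y \<epsilon> d" "\<epsilon> \<le> \<epsilon>'"
  shows "um_prop Y \<epsilon>' d"
  using assms unfolding um_prop_def by force

lemma uniformly_monotone_with_imp_cond3_with:
  assumes "uniformly_monotone_with Y \<delta>"
  shows "cond3_with Y (\<lambda>\<epsilon>. \<delta> \<epsilon> / (1 + \<delta> \<epsilon>))"
  using assms unfolding uniformly_monotone_with_def cond3_with_def
  by (auto intro!: um_prop_imp_cond3_prop)

lemma cond2_with_imp_um_prop:
  assumes "cond2_with Y \<eta>" "0 < \<epsilon>" "\<epsilon> < 2"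
  shows "um_prop Y \<epsilon> (\<eta> (\<epsilon> / 2))"
proof (rule cond3_prop_imp_um_prop)
  show "cond3_prop Y (\<epsilon> / 2) (\<eta> (\<epsilon> / 2))"
    using assms unfolding cond2_with_def by (auto intro: cond2_prop_imp_cond3_prop)
qed (use assms in auto)

lemma cond2_with_imp_uniformly_monotone:
  assumes "cond2_with Y \<eta>"
  shows "uniformly_monotone Y"
proof -
  have "uniformly_monotone_with Y (\<lambda>\<epsilon>. \<eta> (min \<epsilon> 1 / 2))"
    unfolding uniformly_monotone_with_def
  proof (intro allI impI)
    fix \<epsilon> :: real
    assume "\<epsilon> > 0"
    then have "um_prop Y (min \<epsilon> 1) (\<eta> (min \<epsilon> 1 / 2))"
      using cond2_with_imp_um_prop[OF assms] by simp
    then show "um_prop Y \<epsilon> (\<eta> (min \<epsilon> 1 / 2))"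
      by (rule um_prop_mono) simp
  qed
  then show ?thesis
    unfolding uniformly_monotone_def by blast
qed

theorem proposition4p2:
  fixes Y :: "'a::banach_lattice itself"
  shows "(uniformly_monotone Y \<longleftrightarrow> (\<exists>\<eta>. cond2_with Y \<eta>))
    \<and> (uniformly_monotone Y \<longleftrightarrow> (\<exists>\<eta>. cond3_with Y \<eta>))
    \<and> (\<forall>\<eta>. cond2_with Y \<eta> \<longrightarrow>
          (\<forall>\<epsilon>. 0 < \<epsilon> \<and> \<epsilon> < 2 \<longrightarrow> um_prop Y \<epsilon> (\<eta> (\<epsilon> / 2))))
    \<and> (\<forall>\<delta>. uniformly_monotone_with Y \<delta> \<longrightarrow>
          cond2_with Y (\<lambda>\<epsilon>. \<delta> \<epsilon> / (1 + \<delta> \<epsilon>)) \<and>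
          cond3_with Y (\<lambda>\<epsilon>. \<delta> \<epsilon> / (1 + \<delta> \<epsilon>)))"
proof (intro conjI allI impI)
  show "uniformly_monotone Y \<longleftrightarrow> (\<exists>\<eta>. cond2_with Y \<eta>)"
    using uniformly_monotone_with_imp_cond3_with cond2_with_iff_cond3_with
      cond2_with_imp_uniformly_monotone
    unfolding uniformly_monotone_def by metis
  then show "uniformly_monotone Y \<longleftrightarrow> (\<exists>\<eta>. cond3_with Y \<eta>)"
    by (simp add: cond2_with_iff_cond3_with)
  show "um_prop Y \<epsilon> (\<eta> (\<epsilon> / 2))" if "cond2_with Y \<eta>" "0 < \<epsilon> \<and> \<epsilon> < 2" for \<eta> \<epsilon>
    using that cond2_with_imp_um_prop by blast
  show "cond3_with Y (\<lambda>\<epsilon>. \<delta> \<epsilon> / (1 + \<delta> \<epsilon>))" if "uniformly_monotone_with Y \<delta>" for \<delta>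
    using that by (rule uniformly_monotone_with_imp_cond3_with)
  then show "cond2_with Y (\<lambda>\<epsilon>. \<delta> \<epsilon> / (1 + \<delta> \<epsilon>))" if "uniformly_monotone_with Y \<delta>" for \<delta>
    using that by (simp add: cond2_with_iff_cond3_with)
qed

end
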